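(* Let $A$ be a quasi-quantale with top $1$ and bottom $0$, and let $B$ be a subquasi-quantale of $A$ with $0,1\in B$ and $1b\leq b$, $b1\leq b$ for all $b\in B$. Endow $Spec_B(A)$ with the topology whose open sets are $\mathcal{U}(b)=\{p\in Spec_B(A)\mid b\nleq p\}$, $b\in B$, let $\mathcal{O}(Spec_B(A))$ be its frame of open sets, and define $\mathcal{U}_*\colon\mathcal{O}(Spec_B(A))\to B$ by $\mathcal{U}_*(W)=\bigvee\{b\in B\mid \mathcal{U}(b)\subseteq W\}$. Then the closure operator $\mu=\mathcal{U}_*\circ\mathcal{U}\colon B\to B$ is a multiplicative pre-nucleus: for all $a,b\in B$, $\mu(ab)=\mu(a)\wedge\mu(b)$ and $\mu(a\sqcap b)=\mu(a)\wedge\mu(b)$, where $\sqcap$ denotes the meet in the complete lattice $B$.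
   Context: A quasi-quantale is a complete lattice $A$ equipped with an associative binary operation $(a,b)\mapsto ab$ such that for every directed subset $X\subseteq A$ (non-empty, and any two elements of $X$ have an upper bound in $X$) and every $a\in A$: $(\bigvee X)a=\bigvee\{xa\mid x\in X\}$ and $a(\bigvee X)=\bigvee\{ax\mid x\in X\}$. A subquasi-quantale of $A$ is a subset $B\subseteq A$ closed under arbitrary joins of $A$ and under the product. An element $p\in A$ is prime relative to $B$ if $p\neq 1$ and whenever $a,b\in B$ with $ab\leq p$, then $a\leq p$ or $b\leq p$. $Spec_B(A)$ is the set of elements of $A$ prime relative to $B$. *)

theory Defs
  imports Main
begin

definition directed_set :: "'a::order set \<Rightarrow> bool" where
  "directed_set X \<longleftrightarrow> X \<noteq> {} \<and> (\<forall>x\<in>X. \<forall>y\<in>X. \<exists>z\<in>X. x \<le> z \<and> y \<le> z)"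

definition quasi_quantale :: "('a::complete_lattice \<Rightarrow> 'a \<Rightarrow> 'a) \<Rightarrow> bool" where
  "quasi_quantale m \<longleftrightarrow>
     (\<forall>a b c. m (m a b) c = m a (m b c)) \<and>
     (\<forall>X a. directed_set X \<longrightarrow>
        m (Sup X) a = Sup ((\<lambda>x. m x a) ` X) \<and> m a (Sup X) = Sup ((\<lambda>x. m a x) ` X))"

definition subquasi_quantale :: "('a::complete_lattice \<Rightarrow> 'a \<Rightarrow> 'a) \<Rightarrow> 'a set \<Rightarrow> bool" where
  "subquasi_quantale m B \<longleftrightarrow> (\<forall>S\<subseteq>B. Sup S \<in> B) \<and> (\<forall>a\<in>B. \<forall>b\<in>B. m a b \<in> B)"

definition prime_rel :: "('a::complete_lattice \<Rightarrow> 'a \<Rightarrow> 'a) \<Rightarrow> 'a set \<Rightarrow> 'a \<Rightarrow> bool" where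
  "prime_rel m B p \<longleftrightarrow> p \<noteq> top \<and>
     (\<forall>a\<in>B. \<forall>b\<in>B. m a b \<le> p \<longrightarrow> a \<le> p \<or> b \<le> p)"

definition Spec :: "('a::complete_lattice \<Rightarrow> 'a \<Rightarrow> 'a) \<Rightarrow> 'a set \<Rightarrow> 'a set" where
  "Spec m B = {p. prime_rel m B p}"

definition Uopen :: "('a::complete_lattice \<Rightarrow> 'a \<Rightarrow> 'a) \<Rightarrow> 'a set \<Rightarrow> 'a \<Rightarrow> 'a set" where
  "Uopen m B b = {p \<in> Spec m B. \<not> b \<le> p}"

definition Ulower :: "('a::complete_lattice \<Rightarrow> 'a \<Rightarrow> 'a) \<Rightarrow> 'a set \<Rightarrow> 'a set \<Rightarrow> 'a" where
  "Ulower m B W = Sup {b \<in> B. Uopen m B b \<subseteq> W}"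

definition mu :: "('a::complete_lattice \<Rightarrow> 'a \<Rightarrow> 'a) \<Rightarrow> 'a set \<Rightarrow> 'a \<Rightarrow> 'a" where
  "mu m B a = Ulower m B (Uopen m B a)"

text \<open>Meet in the complete lattice B (B closed under arbitrary joins of A).\<close>
definition meetB :: "'a::complete_lattice set \<Rightarrow> 'a \<Rightarrow> 'a \<Rightarrow> 'a" where
  "meetB B a b = Sup {c \<in> B. c \<le> a \<and> c \<le> b}"

end

theory Submission
  imports Defs
begin

(* U sends both a b and the B-meet a \<sqinter> b to U(a) \<inter> U(b): for the product the inclusion
   \<supseteq> is primality, and a b \<le> a \<sqinter> b because 1 b \<le> b and a 1 \<le> a. Being a right adjoint
   of U, the map U_* turns that intersection into the meet of \<mu>(a) and \<mu>(b) in B. *)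

lemma quasi_quantale_mono_left:
  assumes "quasi_quantale m" "x \<le> y"
  shows "m x a \<le> m y a"
proof -
  have "directed_set {x, y}"
    using assms(2) unfolding directed_set_def by auto
  moreover have "Sup {x, y} = y"
    using assms(2) by (simp add: sup_absorb2)
  ultimately have "m y a = Sup ((\<lambda>z. m z a) ` {x, y})"
    using assms(1) unfolding quasi_quantale_def by metis
  then show ?thesis by (simp only:) (rule SUP_upper, simp)
qed

lemma quasi_quantale_mono_right:
  assumes "quasi_quantale m" "x \<le> y"
  shows "m a x \<le> m a y"
proof -
  have "directed_set {x, y}"
    using assms(2) unfolding directed_set_def by auto
  moreover have "Sup {x, y} = y"
    using assms(2) by (simp add: sup_absorb2)
  ultimately have "m a y = Sup ((\<lambda>z. m a z) ` {x, y})"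
    using assms(1) unfolding quasi_quantale_def by metis
  then show ?thesis by (simp only:) (rule SUP_upper, simp)
qed

lemma quasi_quantale_mult_le_left:
  assumes "quasi_quantale m" "m a top \<le> a"
  shows "m a b \<le> a"
  using quasi_quantale_mono_right[OF assms(1) top_greatest] assms(2) by (rule order_trans)

lemma quasi_quantale_mult_le_right:
  assumes "quasi_quantale m" "m top b \<le> b"
  shows "m a b \<le> b"
  using quasi_quantale_mono_left[OF assms(1) top_greatest] assms(2) by (rule order_trans)

lemma meetB_lower:
  shows "meetB B a b \<le> a" and "meetB B a b \<le> b"
  unfolding meetB_def by (auto intro: Sup_least)

lemma meetB_greatest: "c \<in> B \<Longrightarrow> c \<le> a \<Longrightarrow> c \<le> b \<Longrightarrow> c \<le> meetB B a b"
  unfolding meetB_def by (rule Sup_upper) blast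

lemma Uopen_mono: "c \<le> d \<Longrightarrow> Uopen m B c \<subseteq> Uopen m B d"
  unfolding Uopen_def using order_trans by blast

lemma Uopen_Sup: "Uopen m B (Sup S) = (\<Union>d\<in>S. Uopen m B d)"
  unfolding Uopen_def by (auto simp: Sup_le_iff)

lemma Uopen_mult:
  assumes "a \<in> B" "b \<in> B" "m a b \<le> a" "m a b \<le> b"
  shows "Uopen m B (m a b) = Uopen m B a \<inter> Uopen m B b"
proof
  show "Uopen m B (m a b) \<subseteq> Uopen m B a \<inter> Uopen m B b"
    using Uopen_mono[OF assms(3)] Uopen_mono[OF assms(4)] by blast
  show "Uopen m B a \<inter> Uopen m B b \<subseteq> Uopen m B (m a b)"
    using assms(1,2) unfolding Uopen_def Spec_def prime_rel_def by blast
qed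

lemma Uopen_meetB:
  assumes "a \<in> B" "b \<in> B" "m a b \<in> B" "m a b \<le> a" "m a b \<le> b"
  shows "Uopen m B (meetB B a b) = Uopen m B a \<inter> Uopen m B b"
proof -
  have "m a b \<le> meetB B a b"
    using assms(3-5) by (rule meetB_greatest)
  then show ?thesis
    using Uopen_mono[of "m a b" "meetB B a b" m B] Uopen_mult[where m = m, OF assms(1,2,4,5)]
      Uopen_mono[OF meetB_lower(1)] Uopen_mono[OF meetB_lower(2)]
    by blast
qed

lemma Uopen_Ulower_subset: "Uopen m B (Ulower m B W) \<subseteq> W"
  unfolding Ulower_def Uopen_Sup by blast

lemma Ulower_upper: "c \<in> B \<Longrightarrow> Uopen m B c \<subseteq> W \<Longrightarrow> c \<le> Ulower m B W"
  unfolding Ulower_def by (rule Sup_upper) blast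

lemma Ulower_mono: "V \<subseteq> W \<Longrightarrow> Ulower m B V \<le> Ulower m B W"
  unfolding Ulower_def by (rule Sup_subset_mono) blast

lemma Ulower_in:
  assumes "\<forall>S\<subseteq>B. Sup S \<in> B"
  shows "Ulower m B W \<in> B"
  unfolding Ulower_def by (rule assms[rule_format]) blast

lemma Ulower_Int:
  assumes "\<forall>S\<subseteq>B. Sup S \<in> B"
  shows "Ulower m B (V \<inter> W) = meetB B (Ulower m B V) (Ulower m B W)"
proof (rule antisym)
  show "Ulower m B (V \<inter> W) \<le> meetB B (Ulower m B V) (Ulower m B W)"
    by (intro meetB_greatest Ulower_in[OF assms] Ulower_mono) auto
  have "Uopen m B (meetB B (Ulower m B V) (Ulower m B W)) \<subseteq> V \<inter> W"
    using Uopen_mono[OF meetB_lower(1)] Uopen_mono[OF meetB_lower(2)]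
      Uopen_Ulower_subset[of m B V] Uopen_Ulower_subset[of m B W]
    by blast
  moreover have "meetB B (Ulower m B V) (Ulower m B W) \<in> B"
    unfolding meetB_def by (rule assms[rule_format]) blast
  ultimately show "meetB B (Ulower m B V) (Ulower m B W) \<le> Ulower m B (V \<inter> W)"
    by (rule Ulower_upper[rotated])
qed

theorem theorem3p21:
  fixes m :: "'a::complete_lattice \<Rightarrow> 'a \<Rightarrow> 'a" and B :: "'a set"
  assumes "quasi_quantale m"
    and "subquasi_quantale m B"
    and "bot \<in> B" and "top \<in> B"
    and "\<forall>b\<in>B. m top b \<le> b \<and> m b top \<le> b"
  shows "\<forall>a\<in>B. \<forall>b\<in>B.
           mu m B (m a b) = meetB B (mu m B a) (mu m B b) \<and>
           mu m B (meetB B a b) = meetB B (mu m B a) (mu m B b)"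
proof (intro ballI)
  fix a b assume a: "a \<in> B" and b: "b \<in> B"
  have Sup_closed: "\<forall>S\<subseteq>B. Sup S \<in> B" and ab: "m a b \<in> B"
    using assms(2) a b unfolding subquasi_quantale_def by auto
  have le: "m a b \<le> a" "m a b \<le> b"
    using quasi_quantale_mult_le_left[OF assms(1)] quasi_quantale_mult_le_right[OF assms(1)]
      assms(5) a b
    by simp_all
  have "mu m B (m a b) = Ulower m B (Uopen m B a \<inter> Uopen m B b)"
    unfolding mu_def Uopen_mult[where m = m, OF a b le] ..
  moreover have "mu m B (meetB B a b) = Ulower m B (Uopen m B a \<inter> Uopen m B b)"
    unfolding mu_def Uopen_meetB[where m = m, OF a b ab le] ..
  ultimately show "mu m B (m a b) = meetB B (mu m B a) (mu m B b) \<and>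
      mu m B (meetB B a b) = meetB B (mu m B a) (mu m B b)"
    unfolding Ulower_Int[OF Sup_closed] mu_def by simp
qed

end
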